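(* There is an absolute constant $c>0$ such that for every sufficiently large positive integer $n$ the following holds. Let $f=f_n:\mathbb{R}\to\mathbb{R}$ be the continuous function which equals $1$ on $[\frac{1}{n},1-\frac{1}{n}]$, equals $-1$ on $[-1+\frac{1}{n},-\frac{1}{n}]$, equals $0$ for $|t|\geq 1$, and is linear on each of the intervals $[-1,-1+\frac{1}{n}]$, $[-\frac{1}{n},\frac{1}{n}]$ and $[1-\frac{1}{n},1]$. Then $$\bigg|\,\mathrm{p.v.}\int_{\mathbb{R}} e^{if(t)}\frac{dt}{t}\bigg| \geq c \log n.$$
   Context: The principal value integral is $\mathrm{p.v.}\int_{\mathbb{R}} e^{if(t)}\frac{dt}{t}=\lim_{\epsilon\to 0^+,\,R\to\infty}\int_{\epsilon\leq |t|\leq R} e^{if(t)}\frac{dt}{t}$. *)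

theory Defs
  imports "HOL-Analysis.Analysis"
begin

definition fn :: "nat \<Rightarrow> real \<Rightarrow> real" where
  "fn n t = (if \<bar>t\<bar> \<ge> 1 then 0
             else if \<bar>t\<bar> \<le> 1 / real n then real n * t
             else if \<bar>t\<bar> \<ge> 1 - 1 / real n then sgn t * (real n * (1 - \<bar>t\<bar>))
             else sgn t)"

definition trunc_int :: "(real \<Rightarrow> real) \<Rightarrow> real \<Rightarrow> real \<Rightarrow> complex" where
  "trunc_int f eps R = integral {t. eps \<le> \<bar>t\<bar> \<and> \<bar>t\<bar> \<le> R} (\<lambda>t. exp (\<i> * of_real (f t)) / of_real t)"

definition pv_has_value :: "(real \<Rightarrow> real) \<Rightarrow> complex \<Rightarrow> bool" where
  "pv_has_value f L \<longleftrightarrow> ((\<lambda>(eps, R). trunc_int f eps R) \<longlongrightarrow> L) (at_right 0 \<times>\<^sub>F at_top)"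

end

theory Submission
  imports Defs
begin

text \<open>Since \<open>f\<close> is odd, the contributions of \<open>t\<close> and \<open>-t\<close> combine to
  \<open>2 i sin (f t) / t\<close>, so every truncated integral equals \<open>2 i \<integral>\<^sub>\<epsilon>\<^sup>1 sin (f t) / t dt\<close>
  (the integrand vanishes for \<open>t \<ge> 1\<close>). For \<open>f = f\<^sub>n\<close> this integrand lies in \<open>[0, n]\<close>,
  so the integral is monotone and bounded in \<open>\<epsilon>\<close> and the principal value exists. On
  \<open>[1/n, 1 - 1/n]\<close> the integrand is \<open>sin 1 / t\<close>, contributing
  \<open>sin 1 \<cdot> ln (n - 1) \<ge> (sin 1 / 2) ln n\<close>.\<close>

lemma trunc_int_odd:
  assumes odd: "\<And>t. f (- t) = - f t" and cont: "continuous_on {eps..R} f"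
    and eps: "0 < eps" "eps \<le> R"
  shows "trunc_int f eps R = 2 * \<i> * of_real (integral {eps..R} (\<lambda>t. sin (f t) / t))"
proof -
  define g where "g t = exp (\<i> * of_real (f t)) / complex_of_real t" for t
  have cont_g: "continuous_on {eps..R} g" and cont_g_reflect: "continuous_on {eps..R} (\<lambda>t. g (- t))"
    unfolding g_def odd using eps by (auto intro!: continuous_intros cont)
  note int_g = integrable_continuous_real[OF cont_g]
    and int_g_reflect = integrable_continuous_real[OF cont_g_reflect]
  have "(g has_integral integral {eps..R} (\<lambda>t. g (- t))) {-R..-eps}"
    using has_integral_reflect_real[of "\<lambda>t. g (- t)" _ R eps] integrable_integral[OF int_g_reflect]
    by simp
  moreover have "{t. eps \<le> \<bar>t\<bar> \<and> \<bar>t\<bar> \<le> R} = {-R..-eps} \<union> {eps..R}"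
    using eps by auto
  ultimately have "(g has_integral integral {eps..R} (\<lambda>t. g (- t)) + integral {eps..R} g)
                     {t. eps \<le> \<bar>t\<bar> \<and> \<bar>t\<bar> \<le> R}"
    using has_integral_Un[OF _ integrable_integral[OF int_g]] eps by simp
  then have "trunc_int f eps R = integral {eps..R} (\<lambda>t. g t + g (- t))"
    unfolding trunc_int_def g_def[symmetric] integral_add[OF int_g int_g_reflect]
    by (simp add: integral_unique add.commute)
  also have "\<dots> = integral {eps..R} (\<lambda>t. 2 * \<i> * of_real (sin (f t) / t))"
  proof (rule integral_cong)
    fix t assume "t \<in> {eps..R}"
    then have "t \<noteq> 0" using eps by auto
    then show "g t + g (- t) = 2 * \<i> * of_real (sin (f t) / t)"
      unfolding g_def odd by (simp add: sin_exp_eq field_simps flip: sin_of_real)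
  qed
  also have "\<dots> = 2 * \<i> * of_real (integral {eps..R} (\<lambda>t. sin (f t) / t))"
  proof (rule integral_unique[OF has_integral_mult_right[OF has_integral_of_real]])
    show "((\<lambda>t. sin (f t) / t) has_integral integral {eps..R} (\<lambda>t. sin (f t) / t)) {eps..R}"
      using eps by (auto intro!: integrable_integral integrable_continuous_real continuous_intros cont)
  qed
  finally show ?thesis .
qed

lemma integral_tendsto_at_right_0:
  fixes g :: "real \<Rightarrow> real"
  assumes int: "\<And>a. 0 < a \<Longrightarrow> g integrable_on {a..b}"
    and nonneg: "\<And>t. 0 < t \<Longrightarrow> 0 \<le> g t" and bound: "\<And>t. 0 < t \<Longrightarrow> g t \<le> B"
  obtains M where "((\<lambda>e. integral {e..b} g) \<longlongrightarrow> M) (at_right 0)"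
    and "\<And>a. 0 < a \<Longrightarrow> integral {a..b} g \<le> M"
proof -
  define G where "G e = integral {e..b} g" for e
  have antimono: "G c \<le> G a" if "0 < a" "a \<le> c" for a c
  proof (cases "c \<le> b")
    case True
    then show ?thesis
      unfolding G_def using that by (intro integral_subset_le int) (auto intro: nonneg)
  next
    case False
    then show ?thesis
      unfolding G_def using that by (auto intro!: integral_nonneg int nonneg)
  qed
  have bounded: "G a \<le> B * \<bar>b\<bar>" if "0 < a" for a
  proof (cases "a \<le> b")
    case True
    have "G a \<le> integral {a..b} (\<lambda>_. B)"
      unfolding G_def using that by (intro integral_le int bound) auto
    also have "\<dots> \<le> B * \<bar>b\<bar>"
      using True that order_trans[OF nonneg bound, of 1] by (simp add: algebra_simps)
    finally show ?thesis .
  next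
    case False
    then show ?thesis using nonneg[of 1] bound[of 1] by (simp add: G_def)
  qed
  have "((\<lambda>e. - G e) \<longlongrightarrow> Inf ((\<lambda>e. - G e) ` ({0<..} \<inter> UNIV))) (at 0 within {0<..} \<inter> UNIV)"
    by (rule Lim_right_bound[where K = "- B * \<bar>b\<bar>"]) (use antimono bounded in auto)
  then have lim: "(G \<longlongrightarrow> - Inf ((\<lambda>e. - G e) ` {0<..})) (at_right 0)"
    using tendsto_minus by fastforce
  moreover have "G a \<le> - Inf ((\<lambda>e. - G e) ` {0<..})" if "0 < a" for a
  proof (rule tendsto_le[OF _ lim tendsto_const])
    show "\<forall>\<^sub>F e in at_right 0. G a \<le> G e"
      using eventually_at_right_real[OF that] by eventually_elim (use antimono in auto)
  qed simp
  ultimately show ?thesis using that unfolding G_def by blast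
qed

lemma pv_has_value_odd:
  assumes odd: "\<And>t. f (- t) = - f t" and cont: "continuous_on {0<..} f"
    and vanish: "\<And>t. 1 \<le> t \<Longrightarrow> f t = 0"
    and lim: "((\<lambda>e. integral {e..1} (\<lambda>t. sin (f t) / t)) \<longlongrightarrow> M) (at_right 0)"
  shows "pv_has_value f (2 * \<i> * of_real M)"
proof -
  have trunc_int_eq: "trunc_int f eps R = 2 * \<i> * of_real (integral {eps..1} (\<lambda>t. sin (f t) / t))"
    if "0 < eps" "eps < 1" "1 \<le> R" for eps R
  proof -
    have cont_eps: "continuous_on {eps..R} f"
      using that by (auto intro: continuous_on_subset[OF cont])
    have "integral {eps..R} (\<lambda>t. sin (f t) / t)
            = integral {eps..1} (\<lambda>t. sin (f t) / t) + integral {1..R} (\<lambda>t. sin (f t) / t)"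
      using that
      by (intro Henstock_Kurzweil_Integration.integral_combine[symmetric]
            integrable_continuous_real continuous_intros cont_eps) auto
    also have "integral {1..R} (\<lambda>t. sin (f t) / t) = 0"
      by (intro integral_unique has_integral_is_0) (simp add: vanish)
    finally show ?thesis
      using trunc_int_odd[OF odd cont_eps] that by simp
  qed
  show ?thesis
    unfolding pv_has_value_def
  proof (rule Lim_transform_eventually)
    show "((\<lambda>p. 2 * \<i> * of_real (integral {fst p..1} (\<lambda>t. sin (f t) / t)))
            \<longlongrightarrow> 2 * \<i> * of_real M) (at_right 0 \<times>\<^sub>F at_top)"
      by (intro tendsto_mult_left tendsto_of_real filterlim_compose[OF lim filterlim_fst])
    show "\<forall>\<^sub>F p in at_right 0 \<times>\<^sub>F at_top.
        2 * \<i> * of_real (integral {fst p..1} (\<lambda>t. sin (f t) / t)) = (case p of (eps, R) \<Rightarrow> trunc_int f eps R)"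
      using eventually_prodI[OF eventually_at_right_real[of 0 1] eventually_ge_at_top[of 1]]
      by (auto elim!: eventually_mono simp: trunc_int_eq)
  qed
qed

lemma ln_le_2_ln_minus_1:
  fixes x :: real
  assumes "3 \<le> x"
  shows "ln x \<le> 2 * ln (x - 1)"
proof -
  have "0 \<le> x * (x - 3)"
    using assms by simp
  then have "x \<le> (x - 1)\<^sup>2"
    by (simp add: power2_eq_square algebra_simps)
  then have "ln x \<le> ln ((x - 1)\<^sup>2)"
    using assms by simp
  then show ?thesis
    using assms by (simp add: ln_realpow)
qed

lemma sin_one_pos: "0 < sin (1 :: real)"
  using pi_gt3 by (intro sin_gt_zero) auto

lemma fn_odd: "fn n (- t) = - fn n t"
  unfolding fn_def by (auto simp: sgn_minus)

lemma fn_eq_0: "1 \<le> t \<Longrightarrow> fn n t = 0"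
  unfolding fn_def by simp

lemma fn_nonneg_eq:
  assumes n: "n \<ge> 2" and t: "t \<ge> 0"
  shows "fn n t = max 0 (min 1 (min (real n * t) (real n * (1 - t))))"
proof -
  have n2: "real n \<ge> 2" using n by simp
  have "t \<le> 1 / real n \<longleftrightarrow> real n * t \<le> 1" "t \<ge> 1 - 1 / real n \<longleftrightarrow> real n * (1 - t) \<le> 1"
    using n2 by (auto simp: field_simps)
  moreover have "t \<ge> 1 \<longleftrightarrow> real n * (1 - t) \<le> 0"
    using n2 by (simp add: mult_le_0_iff)
  moreover have "real n * t \<le> 1 \<Longrightarrow> real n * t \<le> real n * (1 - t)"
    using n2 unfolding right_diff_distrib by linarith
  moreover have "real n * t > 1 \<Longrightarrow> sgn t = 1" using t by (auto simp: sgn_if)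
  ultimately show ?thesis
    unfolding fn_def using t n2 by (auto simp: abs_of_nonneg)
qed

lemma continuous_on_fn: "n \<ge> 2 \<Longrightarrow> continuous_on {0<..} (fn n)"
  by (rule continuous_on_cong[THEN iffD2, OF refl _ continuous_on_max[OF continuous_on_const
        continuous_on_min[OF continuous_on_const continuous_on_min]]])
     (auto simp: fn_nonneg_eq intro!: continuous_intros)

lemma fn_eq_1:
  assumes "n \<ge> 2" "1 / real n \<le> t" "t \<le> 1 - 1 / real n"
  shows "fn n t = 1"
proof -
  have n: "real n \<ge> 2" using assms(1) by simp
  have "1 \<le> real n * t" using assms(2) n by (simp add: field_simps)
  moreover have "1 \<le> real n * (1 - t)" using assms(3) n by (simp add: field_simps)
  moreover have "0 \<le> t" using assms(2) order.trans[of 0 "1 / real n" t] by simp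
  ultimately show ?thesis using fn_nonneg_eq[OF assms(1)] by simp
qed

lemma sin_fn_div_bounds:
  assumes n: "n \<ge> 2" and t: "0 < t"
  shows "0 \<le> sin (fn n t) / t" and "sin (fn n t) / t \<le> real n"
proof -
  have f: "0 \<le> fn n t" "fn n t \<le> 1" "fn n t \<le> real n * t"
    using fn_nonneg_eq[OF n, of t] t by auto
  then have "0 \<le> sin (fn n t)"
    using pi_gt3 by (intro sin_ge_zero) auto
  then show "0 \<le> sin (fn n t) / t" using t by simp
  have "sin (fn n t) \<le> real n * t"
    using sin_x_le_x[OF f(1)] f(3) by linarith
  then show "sin (fn n t) / t \<le> real n"
    using t by (simp add: divide_le_eq mult.commute)
qed

lemma integral_sin_fn_div_ge:
  assumes n: "n \<ge> 3"
  shows "sin 1 * ln (real n - 1) \<le> integral {1 / real n..1} (\<lambda>t. sin (fn n t) / t)"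
proof -
  define a b where "a = 1 / real n" and "b = 1 - 1 / real n"
  have n3: "real n \<ge> 3" using n by simp
  then have a: "0 < a" and ab: "a \<le> b" and b: "b \<le> 1"
    unfolding a_def b_def by (simp_all add: field_simps)
  have "((\<lambda>t. sin 1 / t) has_integral sin 1 * ln b - sin 1 * ln a) {a..b}"
  proof (rule fundamental_theorem_of_calculus[OF ab])
    fix x assume "x \<in> {a..b}"
    then have "0 < x" using a by simp
    then show "((\<lambda>t. sin 1 * ln t) has_vector_derivative sin 1 / x) (at x within {a..b})"
      by (auto intro!: derivative_eq_intros simp flip: has_real_derivative_iff_has_vector_derivative)
  qed
  moreover have "ln b - ln a = ln (real n - 1)"
  proof -
    have "b / a = real n - 1" unfolding a_def b_def using n3 by (simp add: field_simps)
    then show ?thesis using a ab ln_div[of b a] by simp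
  qed
  ultimately have "sin 1 * ln (real n - 1) = integral {a..b} (\<lambda>t. sin 1 / t)"
    by (metis integral_unique right_diff_distrib)
  also have "\<dots> = integral {a..b} (\<lambda>t. sin (fn n t) / t)"
    using n by (intro integral_cong) (simp add: fn_eq_1 a_def b_def)
  also have "\<dots> \<le> integral {a..1} (\<lambda>t. sin (fn n t) / t)"
    using n a b
    by (intro integral_subset_le integrable_continuous_real continuous_intros
          continuous_on_subset[OF continuous_on_fn]) (auto intro: sin_fn_div_bounds)
  finally show ?thesis unfolding a_def .
qed

lemma pv_fn_norm_ge:
  assumes n: "n \<ge> 3"
  shows "\<exists>L. pv_has_value (fn n) L \<and> norm L \<ge> sin 1 * ln (real n)"
proof -
  have n2: "n \<ge> 2" using n by simp
  obtain M where lim: "((\<lambda>e. integral {e..1} (\<lambda>t. sin (fn n t) / t)) \<longlongrightarrow> M) (at_right 0)"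
    and le_M: "\<And>a. 0 < a \<Longrightarrow> integral {a..1} (\<lambda>t. sin (fn n t) / t) \<le> M"
    by (rule integral_tendsto_at_right_0[of "\<lambda>t. sin (fn n t) / t" 1 "real n"])
       (use sin_fn_div_bounds[OF n2] in \<open>auto intro!: integrable_continuous_real continuous_intros
          continuous_on_subset[OF continuous_on_fn[OF n2]]\<close>)
  have "sin 1 * ln (real n) \<le> sin 1 * (2 * ln (real n - 1))"
    using n sin_one_pos by (intro mult_left_mono ln_le_2_ln_minus_1) auto
  also have "\<dots> \<le> 2 * M"
    using integral_sin_fn_div_ge[OF n] le_M[of "1 / real n"] n by simp
  also have "\<dots> \<le> norm (2 * \<i> * complex_of_real M)"
    by (simp add: norm_mult)
  finally show ?thesis
    using pv_has_value_odd[OF fn_odd continuous_on_fn[OF n2] fn_eq_0 lim] by blast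
qed

theorem lemma1:
  shows "\<exists>c>0. \<forall>\<^sub>F n in sequentially.
           \<exists>L. pv_has_value (fn n) L \<and> norm L \<ge> c * ln (real n)"
proof (intro exI conjI)
  show "0 < sin (1 :: real)"
    by (rule sin_one_pos)
  show "\<forall>\<^sub>F n in sequentially. \<exists>L. pv_has_value (fn n) L \<and> norm L \<ge> sin 1 * ln (real n)"
    using eventually_ge_at_top[of 3] by (rule eventually_mono) (rule pv_fn_norm_ge)
qed

end
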